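(* Let $M$ be a finitely generated permutable monoid. Then the language $\{a^nb^n : n\ge1\}^*$ over $\{a,b\}$ does not belong to $\mathfrak{L}_{Rat}(M)$.
   Context: A monoid $M$ is permutable if for some $n\ge 2$, for all $s_1,\dots,s_n\in M$ there is a non-identity permutation $\sigma$ of $\{1,\dots,n\}$ with $s_1\cdots s_n=s_{\sigma(1)}\cdots s_{\sigma(n)}$. An $M$-automaton is a tuple $(Q,\Sigma,M,\delta,q_0,Q_a)$ with finite state set, input alphabet $\Sigma$, initial state $q_0$, accept states $Q_a$, and $\delta: Q\times(\Sigma\cup\{\varepsilon\})\to\mathbb{P}(Q\times M)$ finite-valued; $(q',m)\in\delta(q,\sigma)$ means reading $\sigma$ in state $q$ it may go to $q'$ and multiply the register on the right by $m$. A rational monoid automaton over $M$ is an $M$-automaton with rational subsets $I_0,I_1\subseteq M$; $w$ is accepted if some computation reading $w$ from $q_0$ to an accept state has register product $x$ with $x_0x\in I_1$ for some $x_0\in I_0$. $\mathfrak{L}_{Rat}(M)$ is the family of languages so accepted. *)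

theory Defs
  imports "HOL-Combinatorics.Permutations"
begin

inductive_set mstar :: "'a::monoid_mult set \<Rightarrow> 'a set" for A where
  one: "1 \<in> mstar A"
| step: "x \<in> A \<Longrightarrow> y \<in> mstar A \<Longrightarrow> x * y \<in> mstar A"

definition set_prod :: "'a::monoid_mult set \<Rightarrow> 'a set \<Rightarrow> 'a set" where
  "set_prod A B = {x * y | x y. x \<in> A \<and> y \<in> B}"

inductive_set rational_subsets :: "'a::monoid_mult set set" where
  fin: "finite A \<Longrightarrow> A \<in> rational_subsets"
| union: "A \<in> rational_subsets \<Longrightarrow> B \<in> rational_subsets \<Longrightarrow> A \<union> B \<in> rational_subsets"
| prod: "A \<in> rational_subsets \<Longrightarrow> B \<in> rational_subsets \<Longrightarrow> set_prod A B \<in> rational_subsets"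
| star: "A \<in> rational_subsets \<Longrightarrow> mstar A \<in> rational_subsets"

definition finitely_generated :: "'a::monoid_mult itself \<Rightarrow> bool" where
  "finitely_generated TYPE('a) \<longleftrightarrow> (\<exists>G :: 'a set. finite G \<and> mstar G = UNIV)"

definition permutable :: "'a::monoid_mult itself \<Rightarrow> bool" where
  "permutable TYPE('a) \<longleftrightarrow>
     (\<exists>n::nat. n \<ge> 2 \<and> (\<forall>s :: nat \<Rightarrow> 'a. \<exists>\<sigma>. \<sigma> permutes {1..n} \<and> \<sigma> \<noteq> id \<and>
        prod_list (map s [1..<n+1]) = prod_list (map (\<lambda>i. s (\<sigma> i)) [1..<n+1])))"

text \<open>States are natural numbers (w.l.o.g.); input letters have type 'c;
  None stands for the empty word \<epsilon>.
  run delta q w x q': reading w from q the automaton can reach q' with register product x.\<close>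
inductive run :: "(nat \<Rightarrow> 'c option \<Rightarrow> (nat \<times> 'a::monoid_mult) set)
                   \<Rightarrow> nat \<Rightarrow> 'c list \<Rightarrow> 'a \<Rightarrow> nat \<Rightarrow> bool" for \<delta> where
  nil: "run \<delta> q [] 1 q"
| eps: "(q', m) \<in> \<delta> q None \<Longrightarrow> run \<delta> q' w x q'' \<Longrightarrow> run \<delta> q w (m * x) q''"
| letter: "(q', m) \<in> \<delta> q (Some c) \<Longrightarrow> run \<delta> q' w x q'' \<Longrightarrow> run \<delta> q (c # w) (m * x) q''"

definition is_M_automaton ::
  "nat set \<Rightarrow> 'c set \<Rightarrow> (nat \<Rightarrow> 'c option \<Rightarrow> (nat \<times> 'a::monoid_mult) set) \<Rightarrow> nat \<Rightarrow> nat set \<Rightarrow> bool" where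
  "is_M_automaton Q \<Sigma> \<delta> q0 Qa \<longleftrightarrow>
     finite Q \<and> q0 \<in> Q \<and> Qa \<subseteq> Q \<and>
     (\<forall>q c. finite (\<delta> q c) \<and>
        (q \<notin> Q \<or> (c \<noteq> None \<and> the c \<notin> \<Sigma>) \<longrightarrow> \<delta> q c = {}) \<and>
        fst ` \<delta> q c \<subseteq> Q)"

definition rat_accepted ::
  "(nat \<Rightarrow> 'c option \<Rightarrow> (nat \<times> 'a::monoid_mult) set) \<Rightarrow> nat \<Rightarrow> nat set \<Rightarrow> 'a set \<Rightarrow> 'a set \<Rightarrow> 'c list set" where
  "rat_accepted \<delta> q0 Qa I0 I1 =
     {w. \<exists>q x. q \<in> Qa \<and> run \<delta> q0 w x q \<and> (\<exists>x0 \<in> I0. x0 * x \<in> I1)}"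

definition L_Rat :: "'a::monoid_mult itself \<Rightarrow> 'c set \<Rightarrow> 'c list set set" where
  "L_Rat TYPE('a) \<Sigma> =
     {L. \<exists>Q (\<delta> :: nat \<Rightarrow> 'c option \<Rightarrow> (nat \<times> 'a) set) q0 Qa I0 I1.
          is_M_automaton Q \<Sigma> \<delta> q0 Qa \<and> I0 \<in> rational_subsets \<and> I1 \<in> rational_subsets \<and>
          L = rat_accepted \<delta> q0 Qa I0 I1}"

datatype ab = a | b

definition anbn_star :: "ab list set" where
  "anbn_star = {concat ws | ws. \<forall>u \<in> set ws. \<exists>n\<ge>1. u = replicate n a @ replicate n b}"

end

theory Submission
  imports Defs "HOL-Library.FuncSet"
begin

text \<open>
  Cut the accepted word (a^c b^c)^(N+1), c = N + 2, into pieces so that the k-th cut lies k + 1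
  letters into the (k+1)-th block of a's. If N = |Q| n, then n + 1 of the cuts are reached in the
  same state, so the n segments between them are loops. Permutability lets us reorder these loops
  without changing the register value, so the reordered word is accepted as well. But the first
  displaced segment now follows an earlier cut than before, which leaves an unbalanced block
  a^(c - m' + m) b^c with m < m'.
\<close>

lemma run_append:
  "run \<delta> q u y p \<Longrightarrow> run \<delta> p v z q' \<Longrightarrow> run \<delta> q (u @ v) (y * z) q'"
proof (induction rule: run.induct)
  case (nil q)
  then show ?case by simp
next
  case (eps q' m q w x q'')
  then show ?case by (metis run.eps mult.assoc)
next
  case (letter q' m q c w x q'')
  then show ?case by (metis run.letter mult.assoc append_Cons)
qed

lemma run_append_split:
  "run \<delta> q w x q' \<Longrightarrow> w = u @ v \<Longrightarrow> \<exists>p y z. run \<delta> q u y p \<and> run \<delta> p v z q' \<and> x = y * z"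
proof (induction arbitrary: u rule: run.induct)
  case (nil q)
  then show ?case using run.nil by fastforce
next
  case (eps q' m q w x q'')
  then show ?case by (metis run.eps mult.assoc)
next
  case (letter q' m q c w x q'')
  show ?case
  proof (cases u)
    case Nil
    then show ?thesis using letter run.nil run.letter by (metis mult_1 self_append_conv2)
  next
    case (Cons c' u')
    with letter.prems have "w = u' @ v" "c' = c" by auto
    then show ?thesis using letter Cons by (metis run.letter mult.assoc)
  qed
qed

lemma run_appendE:
  assumes "run \<delta> q (u @ v) x q'"
  obtains p y z where "run \<delta> q u y p" "run \<delta> p v z q'" "x = y * z"
  using run_append_split[OF assms refl] by blast

lemma run_concat_uptE:
  assumes "run \<delta> p (concat (map f [0..<L])) x p'"
  obtains st ms e where "st 0 = p" "\<And>k. k < L \<Longrightarrow> run \<delta> (st k) (f k) (ms k) (st (Suc k))"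
    "run \<delta> (st L) [] e p'" "x = prod_list (map ms [0..<L]) * e"
  using assms
proof (induction L arbitrary: p' x thesis)
  case 0
  then show ?case by (intro 0(1)[of "\<lambda>_. p" _ x]) auto
next
  case (Suc L)
  from Suc.prems(2) obtain r y z where r1: "run \<delta> p (concat (map f [0..<L])) y r"
    and r2: "run \<delta> r (f L) z p'" and "x = y * z"
    by (auto elim: run_appendE)
  obtain st ms e where "st 0 = p" and steps: "\<And>k. k < L \<Longrightarrow> run \<delta> (st k) (f k) (ms k) (st (Suc k))"
    and "run \<delta> (st L) [] e r" and y: "y = prod_list (map ms [0..<L]) * e"
    using Suc.IH[OF _ r1] by blast
  have "run \<delta> (st L) (f L) (e * z) p'"
    using run_append[OF \<open>run \<delta> (st L) [] e r\<close> r2] by simp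
  define st' where "st' k = (if k \<le> L then st k else p')" for k
  define ms' where "ms' k = (if k < L then ms k else e * z)" for k
  have steps': "run \<delta> (st' k) (f k) (ms' k) (st' (Suc k))" if "k < Suc L" for k
    using that steps \<open>run \<delta> (st L) (f L) (e * z) p'\<close>
    by (cases "k = L") (auto simp: st'_def ms'_def)
  have "map ms' [0..<L] = map ms [0..<L]"
    by (simp add: ms'_def)
  then have x: "x = prod_list (map ms' [0..<Suc L]) * 1"
    using \<open>x = y * z\<close> y by (simp add: ms'_def mult.assoc del: map_eq_conv)
  show ?case
    by (rule Suc.prems(1)[OF _ steps' _ x]) (simp_all add: st'_def \<open>st 0 = p\<close> run.nil)
qed

lemma run_concat_upt:
  assumes "i \<le> j" "\<And>k. i \<le> k \<Longrightarrow> k < j \<Longrightarrow> run \<delta> (st k) (f k) (ms k) (st (Suc k))"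
  shows "run \<delta> (st i) (concat (map f [i..<j])) (prod_list (map ms [i..<j])) (st j)"
  using assms
proof (induction j rule: dec_induct)
  case base
  then show ?case by (simp add: run.nil)
next
  case (step j)
  then show ?case using run_append[of \<delta> "st i" _ _ "st j"] by simp
qed

lemma run_concat_loops:
  "(\<And>j. j \<in> set js \<Longrightarrow> run \<delta> q (v j) (s j) q) \<Longrightarrow>
   run \<delta> q (concat (map v js)) (prod_list (map s js)) q"
  by (induction js) (auto simp: run.nil dest: run_append)

lemma run_target_in:
  "run \<delta> p w x p' \<Longrightarrow> (\<And>q c. fst ` \<delta> q c \<subseteq> Q) \<Longrightarrow> p \<in> Q \<Longrightarrow> p' \<in> Q"
  by (induction rule: run.induct) force+

lemma card_fiber_gt:
  assumes "finite T" "finite Q" "g ` T \<subseteq> Q" "card Q * n < card T"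
  obtains q where "n < card {t \<in> T. g t = q}"
proof -
  have "Q \<noteq> {}"
    using assms by auto
  then obtain q where "card T \<le> card (g -` {q} \<inter> T) * card Q"
    using pigeonhole_card[of g T Q] assms by auto
  moreover have "g -` {q} \<inter> T = {t \<in> T. g t = q}"
    by auto
  ultimately have "n * card Q < card {t \<in> T. g t = q} * card Q"
    using assms(4) by (metis less_le_trans mult.commute)
  then show thesis
    using that mult_less_cancel2 by blast
qed

lemma strict_mono_enumeration:
  assumes "finite S" "n < card S"
  obtains i :: "nat \<Rightarrow> nat" where "strict_mono i" "\<And>j. j \<le> n \<Longrightarrow> i j \<in> S"
proof
  define xs where "xs = sorted_list_of_set S"
  have xs: "sorted_wrt (<) xs" "length xs = card S" "set xs = S"
    using assms(1) by (simp_all add: xs_def)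
  show "strict_mono (\<lambda>j. xs ! min j n + (j - n))"
    unfolding strict_mono_Suc_iff
  proof
    fix j
    show "xs ! min j n + (j - n) < xs ! min (Suc j) n + (Suc j - n)"
    proof (cases "j < n")
      case True
      then have "xs ! j < xs ! Suc j"
        using xs assms(2) by (intro sorted_wrt_nth_less[OF xs(1)]) auto
      with True show ?thesis by simp
    qed simp
  qed
  show "xs ! min j n + (j - n) \<in> S" if "j \<le> n" for j
    using that xs assms(2) by (metis min_absorb1 diff_is_0_eq' add_0_right order.strict_trans1 nth_mem)
qed

lemma upt_append: "i \<le> j \<Longrightarrow> j \<le> k \<Longrightarrow> [i..<j] @ [j..<k] = [i..<k]"
  using upt_add_eq_append[of i j "k - j"] by simp

lemma prod_list_upt_telescope:
  fixes g :: "nat \<Rightarrow> 'a::monoid_mult"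
  assumes "mono i"
  shows "prod_list (map (\<lambda>j. prod_list (map g [i (j - 1)..<i j])) [1..<n+1]) = prod_list (map g [i 0..<i n])"
proof (induction n)
  case (Suc n)
  have "i 0 \<le> i n" "i n \<le> i (Suc n)"
    using assms by (simp_all add: monoD)
  then show ?case
    using Suc.IH by (simp flip: upt_append[of "i 0" "i n" "i (Suc n)"])
qed simp

lemma concat_upt_telescope:
  assumes "mono i"
  shows "concat (map (\<lambda>j. concat (map f [i (j - 1)..<i j])) [1..<n+1]) = concat (map f [i 0..<i n])"
proof (induction n)
  case (Suc n)
  have "i 0 \<le> i n" "i n \<le> i (Suc n)"
    using assms by (simp_all add: monoD)
  then show ?case
    using Suc.IH by (simp flip: upt_append[of "i 0" "i n" "i (Suc n)"])
qed simp

lemma permutes_least_moved_point: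
  fixes \<sigma> :: "nat \<Rightarrow> nat"
  assumes "\<sigma> permutes {1..n}" "\<sigma> \<noteq> id"
  obtains j where "j \<in> {1..n}" "j < \<sigma> j" "\<And>k. k < j \<Longrightarrow> \<sigma> k = k"
proof -
  have "\<exists>k. \<sigma> k \<noteq> k"
    using assms(2) by auto
  define j where "j = (LEAST k. \<sigma> k \<noteq> k)"
  have moved: "\<sigma> j \<noteq> j" and fixed: "\<And>k. k < j \<Longrightarrow> \<sigma> k = k"
    using LeastI_ex[OF \<open>\<exists>k. \<sigma> k \<noteq> k\<close>] not_less_Least by (auto simp: j_def)
  have "j \<in> {1..n}"
    using moved permutes_not_in[OF assms(1)] by blast
  moreover have "j < \<sigma> j"
  proof (rule ccontr)
    assume "\<not> j < \<sigma> j"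
    then have "\<sigma> (\<sigma> j) = \<sigma> j"
      using moved fixed by simp
    then show False
      using moved permutes_inj[OF assms(1)] by (metis injD)
  qed
  ultimately show thesis
    using fixed that by blast
qed

definition permuted_segments :: "(nat \<Rightarrow> 'a list) \<Rightarrow> (nat \<Rightarrow> nat) \<Rightarrow> (nat \<Rightarrow> nat) \<Rightarrow> nat \<Rightarrow> nat \<Rightarrow> 'a list"
  where "permuted_segments f i \<sigma> n L =
    concat (map f [0..<i 0]) @ concat (map (\<lambda>j. concat (map f [i (j - 1)..<i j])) (map \<sigma> [1..<n+1])) @
    concat (map f [i n..<L])"

lemma permuted_segments_split:
  assumes "strict_mono i" "\<sigma> permutes {1..n}" "\<sigma> \<noteq> id"
  obtains m m' r where "i 0 \<le> m" "m < m'" "m' < i n"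
    "permuted_segments f i \<sigma> n L = concat (map f [0..<m]) @ f m' @ r"
proof -
  define seg where "seg = (\<lambda>j. concat (map f [i (j - 1)..<i j]))"
  have "mono i"
    using assms(1) by (rule strict_mono_mono)
  obtain j where j: "j \<in> {1..n}" "j < \<sigma> j" and fixed: "\<And>k. k < j \<Longrightarrow> \<sigma> k = k"
    using permutes_least_moved_point[OF assms(2,3)] by blast
  have "\<sigma> j \<le> n"
    using permutes_in_image[OF assms(2)] j(1) by auto
  define m where "m = i (j - 1)"
  define m' where "m' = i (\<sigma> j - 1)"
  have "m < m'" "m' < i (\<sigma> j)"
    using j strict_monoD[OF assms(1)] by (auto simp: m_def m'_def)
  have "i (\<sigma> j) \<le> i n" "i 0 \<le> m"
    using \<open>\<sigma> j \<le> n\<close> monoD[OF \<open>mono i\<close>] by (auto simp: m_def)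
  have split: "[1..<n+1] = [1..<j] @ j # [Suc j..<n+1]"
    using j(1) upt_append[of 1 j "n + 1"] upt_conv_Cons[of j "n + 1"] by (simp del: upt_Suc)
  have "map \<sigma> [1..<j] = [1..<j]"
    using fixed by (intro map_idI) simp
  moreover have "concat (map seg [1..<j]) = concat (map f [i 0..<m])"
    using concat_upt_telescope[OF \<open>mono i\<close>, of f "j - 1"] j(1) by (simp add: seg_def m_def del: upt_Suc)
  then have "concat (map f [0..<i 0]) @ concat (map seg [1..<j]) = concat (map f [0..<m])"
    using upt_append[OF _ \<open>i 0 \<le> m\<close>, of 0] by (metis concat_append map_append zero_le)
  moreover have "seg (\<sigma> j) = f m' @ concat (map f [Suc m'..<i (\<sigma> j)])"
    using \<open>m' < i (\<sigma> j)\<close> by (simp add: seg_def m'_def upt_conv_Cons)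
  ultimately have "permuted_segments f i \<sigma> n L =
      concat (map f [0..<m]) @ f m' @ concat (map f [Suc m'..<i (\<sigma> j)]) @
      concat (map seg (map \<sigma> [Suc j..<n+1])) @ concat (map f [i n..<L])"
    unfolding permuted_segments_def seg_def[symmetric] split by (simp del: upt_Suc)
  moreover have "m' < i n"
    using \<open>m' < i (\<sigma> j)\<close> \<open>i (\<sigma> j) \<le> i n\<close> by simp
  ultimately show thesis
    using that[OF \<open>i 0 \<le> m\<close> \<open>m < m'\<close>] by blast
qed

lemma run_concat_loop_decomposition:
  assumes run: "run \<delta> q0 (concat (map f [0..<L])) x qf"
    and states: "\<And>q c. fst ` \<delta> q c \<subseteq> Q" "finite Q" "q0 \<in> Q"
    and long: "card Q * n < L - 1"
  obtains i q y s z where "strict_mono i" "0 < i 0" "i n < L"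
    "run \<delta> q0 (concat (map f [0..<i 0])) y q"
    "\<And>j. j \<in> {1..n} \<Longrightarrow> run \<delta> q (concat (map f [i (j - 1)..<i j])) (s j) q"
    "run \<delta> q (concat (map f [i n..<L])) z qf"
    "x = y * prod_list (map s [1..<n+1]) * z"
proof -
  obtain st ms e where "st 0 = q0" and steps: "\<And>k. k < L \<Longrightarrow> run \<delta> (st k) (f k) (ms k) (st (Suc k))"
    and tail: "run \<delta> (st L) [] e qf" and x: "x = prod_list (map ms [0..<L]) * e"
    using run_concat_uptE[OF run] by blast
  have chain: "run \<delta> (st k) (concat (map f [k..<l])) (prod_list (map ms [k..<l])) (st l)"
    if "k \<le> l" "l \<le> L" for k l
    using that steps by (intro run_concat_upt) auto
  have "st t \<in> Q" if "t \<le> L" for t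
    using chain[of 0 t] that run_target_in[OF _ states(1,3)] \<open>st 0 = q0\<close> by simp
  then have "st ` {1..L-1} \<subseteq> Q"
    by auto
  then obtain q where "n < card {t \<in> {1..L-1}. st t = q}"
    using card_fiber_gt[of "{1..L-1}" Q st n] long states(2) by auto
  then obtain i where "strict_mono i" and i: "\<And>j. j \<le> n \<Longrightarrow> i j \<in> {t \<in> {1..L-1}. st t = q}"
    using strict_mono_enumeration[of "{t \<in> {1..L-1}. st t = q}" n] by auto
  have "mono i"
    using \<open>strict_mono i\<close> by (rule strict_mono_mono)
  define s where "s = (\<lambda>j. prod_list (map ms [i (j - 1)..<i j]))"
  show thesis
  proof
    show "strict_mono i" "0 < i 0" "i n < L"
      using \<open>strict_mono i\<close> i[of 0] i[of n] by auto
    show "run \<delta> q0 (concat (map f [0..<i 0])) (prod_list (map ms [0..<i 0])) q"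
      using chain[of 0 "i 0"] i[of 0] \<open>st 0 = q0\<close> by auto
    show "run \<delta> q (concat (map f [i (j - 1)..<i j])) (s j) q" if "j \<in> {1..n}" for j
      using chain[of "i (j - 1)" "i j"] i[of j] i[of "j - 1"] that monoD[OF \<open>mono i\<close>, of "j - 1" j]
      by (auto simp: s_def)
    show "run \<delta> q (concat (map f [i n..<L])) (prod_list (map ms [i n..<L]) * e) qf"
      using run_append[OF chain[of "i n" L] tail] i[of n] by auto
    have "i 0 \<le> i n" "i n \<le> L"
      using i[of n] monoD[OF \<open>mono i\<close>, of 0 n] by auto
    then have "[0..<L] = [0..<i 0] @ [i 0..<i n] @ [i n..<L]"
      by (simp add: upt_append)
    then show "x = prod_list (map ms [0..<i 0]) * prod_list (map s [1..<n+1]) * (prod_list (map ms [i n..<L]) * e)"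
      using x prod_list_upt_telescope[OF \<open>mono i\<close>, of ms n]
      by (simp add: s_def mult.assoc del: upt_Suc)
  qed
qed

lemma rat_accepted_permute_loops:
  fixes \<delta> :: "nat \<Rightarrow> 'c option \<Rightarrow> (nat \<times> 'm::monoid_mult) set"
  assumes aut: "is_M_automaton Q \<Sigma> \<delta> q0 Qa"
    and perm: "\<And>s :: nat \<Rightarrow> 'm. \<exists>\<sigma>. \<sigma> permutes {1..n} \<and> \<sigma> \<noteq> id \<and>
      prod_list (map s [1..<n+1]) = prod_list (map (\<lambda>j. s (\<sigma> j)) [1..<n+1])"
    and accepted: "concat (map f [0..<L]) \<in> rat_accepted \<delta> q0 Qa I0 I1"
    and long: "card Q * n < L - 1"
  obtains i \<sigma> where "strict_mono i" "0 < i 0" "i n < L" "\<sigma> permutes {1..n}" "\<sigma> \<noteq> id"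
    "permuted_segments f i \<sigma> n L \<in> rat_accepted \<delta> q0 Qa I0 I1"
proof -
  have states: "\<And>q c. fst ` \<delta> q c \<subseteq> Q" "finite Q" "q0 \<in> Q"
    using aut unfolding is_M_automaton_def by auto
  obtain qf x x0 where accept: "qf \<in> Qa" "x0 \<in> I0" "x0 * x \<in> I1"
    and run: "run \<delta> q0 (concat (map f [0..<L])) x qf"
    using accepted unfolding rat_accepted_def by blast
  obtain i q y s z where i: "strict_mono i" "0 < i 0" "i n < L"
    and prefix: "run \<delta> q0 (concat (map f [0..<i 0])) y q"
    and loops: "\<And>j. j \<in> {1..n} \<Longrightarrow> run \<delta> q (concat (map f [i (j - 1)..<i j])) (s j) q"
    and suffix: "run \<delta> q (concat (map f [i n..<L])) z qf"
    and x: "x = y * prod_list (map s [1..<n+1]) * z"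
    by (rule run_concat_loop_decomposition[OF run states long]) blast
  from perm[of s] obtain \<sigma> where \<sigma>: "\<sigma> permutes {1..n}" "\<sigma> \<noteq> id"
    and s\<sigma>: "prod_list (map s [1..<n+1]) = prod_list (map (\<lambda>j. s (\<sigma> j)) [1..<n+1])"
    by (elim exE conjE)
  have "set (map \<sigma> [1..<n+1]) = {1..n}"
    using permutes_image[OF \<sigma>(1)] by (simp add: atLeastLessThanSuc_atLeastAtMost del: upt_Suc)
  then have "run \<delta> q (concat (map (\<lambda>j. concat (map f [i (j - 1)..<i j])) (map \<sigma> [1..<n+1])))
      (prod_list (map s (map \<sigma> [1..<n+1]))) q"
    using loops by (intro run_concat_loops) blast
  then have "run \<delta> q0 (permuted_segments f i \<sigma> n L) (y * (prod_list (map s (map \<sigma> [1..<n+1])) * z)) qf"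
    unfolding permuted_segments_def by (intro run_append[OF prefix] run_append[OF _ suffix])
  then have "run \<delta> q0 (permuted_segments f i \<sigma> n L) x qf"
    by (simp only: x s\<sigma> map_map comp_def mult.assoc)
  then have "permuted_segments f i \<sigma> n L \<in> rat_accepted \<delta> q0 Qa I0 I1"
    unfolding rat_accepted_def using accept by fast
  with i \<sigma> show thesis
    by (rule that)
qed

definition anbn_blocks :: "nat \<Rightarrow> nat \<Rightarrow> ab list" where
  "anbn_blocks c k = concat (replicate k (replicate c a @ replicate c b))"

definition anbn_piece :: "nat \<Rightarrow> nat \<Rightarrow> ab list" where
  "anbn_piece N k =
     (if k = 0 then [a]
      else if k \<le> N then replicate (N + 2 - k) a @ replicate (N + 2) b @ replicate (k + 1) a
      else a # replicate (N + 2) b)"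

lemma replicate_append_cancel:
  assumes "replicate p x @ s = replicate q x @ t" "s = [] \<or> hd s \<noteq> x" "t = [] \<or> hd t \<noteq> x"
  shows "p = q \<and> s = t"
  using assms
proof (induction p arbitrary: q)
  case 0
  then show ?case by (cases q) auto
next
  case (Suc p)
  then show ?case by (cases q) auto
qed

lemma anbn_star_ConsE:
  assumes "replicate p a @ replicate q b @ y \<in> anbn_star" "1 \<le> p" "1 \<le> q" "y = [] \<or> hd y = a"
  shows "p = q \<and> y \<in> anbn_star"
proof -
  obtain ws where ws: "replicate p a @ replicate q b @ y = concat ws"
    and blocks: "\<forall>u \<in> set ws. \<exists>n\<ge>1. u = replicate n a @ replicate n b"
    using assms(1) by (auto simp: anbn_star_def)
  obtain u rest where "ws = u # rest"
    using ws assms(2) by (cases ws) auto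
  with blocks obtain n where "1 \<le> n" "u = replicate n a @ replicate n b"
    by auto
  have rest: "concat rest \<in> anbn_star"
    using blocks \<open>ws = u # rest\<close> by (auto simp: anbn_star_def)
  have "concat rest = [] \<or> hd (concat rest) = a"
  proof (cases rest)
    case (Cons u' rest')
    then obtain n' where "1 \<le> n'" "u' = replicate n' a @ replicate n' b"
      using blocks \<open>ws = u # rest\<close> by auto
    with Cons show ?thesis by (cases n') auto
  qed simp
  moreover have "replicate p a @ (replicate q b @ y) = replicate n a @ (replicate n b @ concat rest)"
    using ws \<open>ws = u # rest\<close> \<open>u = _\<close> by simp
  ultimately show ?thesis
    using rest assms(3,4) \<open>1 \<le> n\<close>
    by (auto dest!: replicate_append_cancel[where x = a] replicate_append_cancel[where x = b]
        simp: hd_append hd_replicate)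
qed

lemma anbn_blocks_in: "1 \<le> c \<Longrightarrow> anbn_blocks c k \<in> anbn_star"
  unfolding anbn_star_def anbn_blocks_def by (rule CollectI, rule exI[of _ "replicate k _"]) auto

lemma anbn_blocks_Suc: "anbn_blocks c (Suc k) = anbn_blocks c k @ replicate c a @ replicate c b"
  by (simp add: anbn_blocks_def replicate_append_same[symmetric])

lemma anbn_blocks_append_in:
  assumes "1 \<le> c" "anbn_blocks c k @ y \<in> anbn_star" "y = [] \<or> hd y = a"
  shows "y \<in> anbn_star"
  using assms(2)
proof (induction k)
  case (Suc k)
  have "anbn_blocks c k @ y = [] \<or> hd (anbn_blocks c k @ y) = a"
    using assms(1,3) by (cases k; cases c) (auto simp: anbn_blocks_def)
  then show ?case
    using Suc anbn_star_ConsE[of c c "anbn_blocks c k @ y"] assms(1) by (simp add: anbn_blocks_def)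
qed (simp add: anbn_blocks_def)

lemma concat_anbn_pieces:
  assumes "1 \<le> m" "m \<le> N + 1"
  shows "concat (map (anbn_piece N) [0..<m]) = anbn_blocks (N + 2) (m - 1) @ replicate m a"
  using assms
proof (induction m rule: dec_induct)
  case base
  then show ?case by (simp add: anbn_piece_def anbn_blocks_def)
next
  case (step m)
  have "replicate m a @ replicate (N + 2 - m) a = replicate (N + 2) a"
    using step by (simp flip: replicate_add)
  then show ?case
    using step anbn_blocks_Suc[of "N + 2" "m - 1"] by (simp add: anbn_piece_def)
qed

lemma concat_anbn_pieces_in: "concat (map (anbn_piece N) [0..<N + 2]) \<in> anbn_star"
proof -
  have "concat (map (anbn_piece N) [0..<N + 2]) = concat (map (anbn_piece N) [0..<N + 1]) @ anbn_piece N (N + 1)"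
    by simp
  also have "\<dots> = anbn_blocks (N + 2) N @ replicate (Suc (N + 1)) a @ replicate (N + 2) b"
    using concat_anbn_pieces[of "N + 1" N] by (simp add: anbn_piece_def replicate_append_same)
  also have "\<dots> = anbn_blocks (N + 2) (Suc N)"
    by (simp add: anbn_blocks_Suc)
  finally show ?thesis
    using anbn_blocks_in[of "N + 2" "Suc N"] by simp
qed

lemma anbn_pieces_reordered_notin:
  assumes "1 \<le> m" "m < m'" "m' \<le> N"
  shows "concat (map (anbn_piece N) [0..<m]) @ anbn_piece N m' @ r \<notin> anbn_star"
proof
  assume "concat (map (anbn_piece N) [0..<m]) @ anbn_piece N m' @ r \<in> anbn_star"
  moreover have "concat (map (anbn_piece N) [0..<m]) @ anbn_piece N m' @ r =
    anbn_blocks (N + 2) (m - 1) @ (replicate m a @ replicate (N + 2 - m') a) @ replicate (N + 2) b @ a # replicate m' a @ r"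
    using assms concat_anbn_pieces[of m N] by (simp add: anbn_piece_def)
  ultimately have "anbn_blocks (N + 2) (m - 1) @ (replicate (m + (N + 2 - m')) a @ replicate (N + 2) b @ a # replicate m' a @ r) \<in> anbn_star"
    by (simp only: replicate_add append_assoc)
  then have "replicate (m + (N + 2 - m')) a @ replicate (N + 2) b @ a # replicate m' a @ r \<in> anbn_star"
    by (rule anbn_blocks_append_in[rotated]) (use assms in \<open>auto simp: hd_append hd_replicate\<close>)
  then show False
    using anbn_star_ConsE assms by fastforce
qed

theorem corollary1:
  assumes "finitely_generated TYPE('m::monoid_mult)"
    and "permutable TYPE('m)"
  shows "anbn_star \<notin> L_Rat TYPE('m) {a, b}"
proof
  assume "anbn_star \<in> L_Rat TYPE('m) {a, b}"
  then obtain Q and \<delta> :: "nat \<Rightarrow> ab option \<Rightarrow> (nat \<times> 'm) set" and q0 Qa I0 I1 where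
    aut: "is_M_automaton Q {a, b} \<delta> q0 Qa" and lang: "anbn_star = rat_accepted \<delta> q0 Qa I0 I1"
    unfolding L_Rat_def by blast
  obtain n where perm: "\<And>s :: nat \<Rightarrow> 'm. \<exists>\<sigma>. \<sigma> permutes {1..n} \<and> \<sigma> \<noteq> id \<and>
      prod_list (map s [1..<n+1]) = prod_list (map (\<lambda>j. s (\<sigma> j)) [1..<n+1])"
    using assms(2) unfolding permutable_def by blast
  define N where "N = card Q * n"
  have "concat (map (anbn_piece N) [0..<N + 2]) \<in> rat_accepted \<delta> q0 Qa I0 I1"
    using concat_anbn_pieces_in lang by simp
  moreover have "card Q * n < N + 2 - 1"
    by (simp add: N_def)
  ultimately obtain i \<sigma> where i: "strict_mono i" "0 < i 0" "i n < N + 2"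
    and \<sigma>: "\<sigma> permutes {1..n}" "\<sigma> \<noteq> id"
    and "permuted_segments (anbn_piece N) i \<sigma> n (N + 2) \<in> rat_accepted \<delta> q0 Qa I0 I1"
    by (rule rat_accepted_permute_loops[OF aut perm])
  moreover obtain m m' r where "i 0 \<le> m" "m < m'" "m' < i n"
    and "permuted_segments (anbn_piece N) i \<sigma> n (N + 2) = concat (map (anbn_piece N) [0..<m]) @ anbn_piece N m' @ r"
    by (rule permuted_segments_split[OF i(1) \<sigma>])
  moreover have "concat (map (anbn_piece N) [0..<m]) @ anbn_piece N m' @ r \<notin> anbn_star"
    using i(2,3) \<open>i 0 \<le> m\<close> \<open>m < m'\<close> \<open>m' < i n\<close> by (intro anbn_pieces_reordered_notin) auto
  ultimately show False
    using lang by simp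
qed

end
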